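(* Let $\mathsf{P}$ be a program of $\mathcal{H}$. If $\mathsf{P}$ is stratified, then the perfect model of $\mathsf{Gr(P)}$ exists, and consequently the two-valued Herbrand interpretation $\mathcal{N}_\mathsf{P}$ of $\mathsf{P}$ is defined; moreover $\mathcal{N}_\mathsf{P}$ coincides with the well-founded Herbrand interpretation $\mathcal{M}_\mathsf{P}$ of $\mathsf{P}$.
   Context: Types of $\mathcal{H}$: base types $\iota,o$; predicate types $\pi::=o\mid\rho\to\pi$; argument types $\rho::=\iota\mid\pi$. Terms are built from predicate/individual variables and constants and function symbols (types $\iota^n\to\iota$) by typed application; atoms are terms of type $o$; literals are atoms, equalities $(\mathsf{E}_1\approx\mathsf{E}_2)$ of terms of type $\iota$, and negated atoms $\sim\mathsf{E}$. A clause is $\mathsf{p}\,\mathsf{V}_1\cdots\mathsf{V}_n\leftarrow\mathsf{L}_1,\dots,\mathsf{L}_m$ with $\mathsf{p}$ a predicate constant of type $\rho_1\to\cdots\to\rho_n\to o$, distinct variables $\mathsf{V}_i:\rho_i$, literals $\mathsf{L}_j$; a program is a finite set of clauses. Stratified: predicate type $\pi$ is greater than $\pi'$ if $\pi=\rho_1\to\cdots\to\rho_n\to\pi'$, $n\ge1$. $\mathsf{P}$ is stratified if its predicate constants can be partitioned into finitely many sets $S_1,\dots,S_r$ ($\mathit{stratum}(\mathsf{r})=i$ iff $\mathsf{r}\in S_i$) such that for every clause $\mathsf{H}\leftarrow\mathsf{A}_1,\dots,\mathsf{A}_m,\sim\mathsf{B}_1,\dots,\sim\mathsf{B}_n$ with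 head predicate constant $\mathsf{p}$: if $\mathsf{A}_i$ starts with predicate constant $\mathsf{q}$ then $\mathit{stratum}(\mathsf{q})\le\mathit{stratum}(\mathsf{p})$; if $\mathsf{A}_i$ starts with predicate variable $\mathsf{Q}$ then $\mathit{stratum}(\mathsf{q})\le\mathit{stratum}(\mathsf{p})$ for all predicate constants $\mathsf{q}$ of $\mathsf{P}$ of type greater than or equal to that of $\mathsf{Q}$; if $\mathsf{B}_i$ starts with predicate constant $\mathsf{q}$ then $\mathit{stratum}(\mathsf{q})<\mathit{stratum}(\mathsf{p})$; if $\mathsf{B}_i$ starts with predicate variable $\mathsf{Q}$ then $\mathit{stratum}(\mathsf{q})<\mathit{stratum}(\mathsf{p})$ for all predicate constants $\mathsf{q}$ of $\mathsf{P}$ of type greater than or equal to that of $\mathsf{Q}$. Semantics: $U_{\mathsf{P},\rho}$ is the set of ground terms of type $\rho$ built from symbols of $\mathsf{P}$; $\mathsf{Gr(P)}$ is the set of all clauses obtained from clauses of $\mathsf{P}$ by substituting for each variable an element of $U_{\mathsf{P},\rho}$ of its type, regarded as a (possibly infinite) propositional program over the ground atoms $U_{\mathsf{P},o}$ (ground equalities being constants true/false according to syntactic identity). The perfect model of $\mathsf{Gr(P)}$ is the standard (two-valued) perfect model of a propositional program (in the sense of Przymusinski), when it exists; the well-founded model is the standard three-valued well-founded model. $\mathcal{N}_\mathsf{P}$ (resp. $\mathcal{M}_\mathsf{P}$) is the Herbrand interpretation of $\mathsf{P}$ — symbols interpreted by themselves, application syntactic — whose valuation assigns to every ground atom its value in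 the perfect model (resp. well-founded model) of $\mathsf{Gr(P)}$; Herbrand interpretations are identified when their valuation functions coincide. *)

theory Defs
  imports Main "HOL-Library.Product_Order"
begin

datatype ty = Iota | Omicron | Arr ty ty

fun is_pred_ty :: "ty \<Rightarrow> bool" where
  "is_pred_ty Omicron = True"
| "is_pred_ty (Arr r p) = ((r = Iota \<or> is_pred_ty r) \<and> is_pred_ty p)"
| "is_pred_ty Iota = False"

definition is_arg_ty :: "ty \<Rightarrow> bool" where
  "is_arg_ty r \<longleftrightarrow> r = Iota \<or> is_pred_ty r"

fun iota_chain :: "ty \<Rightarrow> bool" where
  "iota_chain Iota = True"
| "iota_chain (Arr Iota r) = iota_chain r"
| "iota_chain _ = False"

definition is_fun_ty :: "ty \<Rightarrow> bool" where
  "is_fun_ty t \<longleftrightarrow> iota_chain t \<and> t \<noteq> Iota"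

fun arrows :: "ty list \<Rightarrow> ty \<Rightarrow> ty" where
  "arrows [] t = t"
| "arrows (r # rs) t = Arr r (arrows rs t)"

text \<open>pi is greater than or equal to pi': pi' is obtained from pi by stripping
  zero or more argument types.\<close>
fun ty_ge :: "ty \<Rightarrow> ty \<Rightarrow> bool" where
  "ty_ge (Arr r p) t = (Arr r p = t \<or> ty_ge p t)"
| "ty_ge s t = (s = t)"

type_synonym sym = "string \<times> ty"

datatype trm = Var sym | Con sym | App trm trm

fun ty_of :: "trm \<Rightarrow> ty option" where
  "ty_of (Var v) = Some (snd v)"
| "ty_of (Con c) = Some (snd c)"
| "ty_of (App s t) = (case ty_of s of Some (Arr a b) \<Rightarrow> (if ty_of t = Some a then Some b else None) | _ \<Rightarrow> None)"

fun vars_of :: "trm \<Rightarrow> sym set" where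
  "vars_of (Var v) = {v}"
| "vars_of (Con c) = {}"
| "vars_of (App s t) = vars_of s \<union> vars_of t"

fun consts_of :: "trm \<Rightarrow> sym set" where
  "consts_of (Var v) = {}"
| "consts_of (Con c) = {c}"
| "consts_of (App s t) = consts_of s \<union> consts_of t"

definition wf_trm :: "trm \<Rightarrow> bool" where
  "wf_trm t \<longleftrightarrow> ty_of t \<noteq> None \<and> (\<forall>v\<in>vars_of t. is_arg_ty (snd v))
     \<and> (\<forall>c\<in>consts_of t. snd c = Iota \<or> is_fun_ty (snd c) \<or> is_pred_ty (snd c))"

datatype lit = Pos trm | Eq trm trm | Neg trm

fun wf_lit :: "lit \<Rightarrow> bool" where
  "wf_lit (Pos a) \<longleftrightarrow> wf_trm a \<and> ty_of a = Some Omicron"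
| "wf_lit (Neg a) \<longleftrightarrow> wf_trm a \<and> ty_of a = Some Omicron"
| "wf_lit (Eq s t) \<longleftrightarrow> wf_trm s \<and> wf_trm t \<and> ty_of s = Some Iota \<and> ty_of t = Some Iota"

fun lit_vars :: "lit \<Rightarrow> sym set" where
  "lit_vars (Pos a) = vars_of a"
| "lit_vars (Neg a) = vars_of a"
| "lit_vars (Eq s t) = vars_of s \<union> vars_of t"

fun lit_consts :: "lit \<Rightarrow> sym set" where
  "lit_consts (Pos a) = consts_of a"
| "lit_consts (Neg a) = consts_of a"
| "lit_consts (Eq s t) = consts_of s \<union> consts_of t"

text \<open>A clause  p V1 ... Vn <- L1, ..., Lm.\<close>
datatype clause = Clause (hd_pred: sym) (hd_args: "sym list") (body: "lit list")

definition head_atom :: "clause \<Rightarrow> trm" where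
  "head_atom c = foldl App (Con (hd_pred c)) (map Var (hd_args c))"

definition wf_clause :: "clause \<Rightarrow> bool" where
  "wf_clause c \<longleftrightarrow>
     is_pred_ty (snd (hd_pred c)) \<and> snd (hd_pred c) = arrows (map snd (hd_args c)) Omicron
     \<and> distinct (hd_args c) \<and> (\<forall>v\<in>set (hd_args c). is_arg_ty (snd v))
     \<and> (\<forall>l\<in>set (body c). wf_lit l)"

definition clause_vars :: "clause \<Rightarrow> sym set" where
  "clause_vars c = set (hd_args c) \<union> (\<Union>l\<in>set (body c). lit_vars l)"

definition is_program :: "clause set \<Rightarrow> bool" where
  "is_program P \<longleftrightarrow> finite P \<and> (\<forall>c\<in>P. wf_clause c)"

definition consts_prog :: "clause set \<Rightarrow> sym set" where
  "consts_prog P = (\<Union>c\<in>P. {hd_pred c} \<union> (\<Union>l\<in>set (body c). lit_consts l))"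

definition pred_consts :: "clause set \<Rightarrow> sym set" where
  "pred_consts P = {c \<in> consts_prog P. is_pred_ty (snd c)}"

fun head_sym :: "trm \<Rightarrow> trm" where
  "head_sym (App s t) = head_sym s"
| "head_sym t = t"

definition stratified :: "clause set \<Rightarrow> bool" where
  "stratified P \<longleftrightarrow> (\<exists>st :: sym \<Rightarrow> nat. \<forall>c\<in>P. \<forall>l\<in>set (body c).
     (case l of
        Pos a \<Rightarrow> (case head_sym a of
                    Con q \<Rightarrow> st q \<le> st (hd_pred c)
                  | Var Q \<Rightarrow> (\<forall>q\<in>pred_consts P. ty_ge (snd q) (snd Q) \<longrightarrow> st q \<le> st (hd_pred c))
                  | _ \<Rightarrow> True)
      | Neg a \<Rightarrow> (case head_sym a of
                    Con q \<Rightarrow> st q < st (hd_pred c)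
                  | Var Q \<Rightarrow> (\<forall>q\<in>pred_consts P. ty_ge (snd q) (snd Q) \<longrightarrow> st q < st (hd_pred c))
                  | _ \<Rightarrow> True)
      | Eq _ _ \<Rightarrow> True))"

definition U :: "clause set \<Rightarrow> ty \<Rightarrow> trm set" where
  "U P r = {t. vars_of t = {} \<and> ty_of t = Some r \<and> consts_of t \<subseteq> consts_prog P}"

fun subst :: "(sym \<Rightarrow> trm) \<Rightarrow> trm \<Rightarrow> trm" where
  "subst \<theta> (Var v) = \<theta> v"
| "subst \<theta> (Con c) = Con c"
| "subst \<theta> (App s t) = App (subst \<theta> s) (subst \<theta> t)"

fun subst_lit :: "(sym \<Rightarrow> trm) \<Rightarrow> lit \<Rightarrow> lit" where
  "subst_lit \<theta> (Pos a) = Pos (subst \<theta> a)"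
| "subst_lit \<theta> (Neg a) = Neg (subst \<theta> a)"
| "subst_lit \<theta> (Eq s t) = Eq (subst \<theta> s) (subst \<theta> t)"

text \<open>Gr(P): ground clauses (head atom, ground body literals); ground equalities are
  evaluated by syntactic identity below.\<close>
definition Gr :: "clause set \<Rightarrow> (trm \<times> lit list) set" where
  "Gr P = {(subst \<theta> (head_atom c), map (subst_lit \<theta>) (body c)) | c \<theta>.
             c \<in> P \<and> (\<forall>v\<in>clause_vars c. \<theta> v \<in> U P (snd v))}"

definition base :: "clause set \<Rightarrow> trm set" where
  "base P = U P Omicron"

section \<open>Perfect model (Przymusinski)\<close>

fun lit_true2 :: "trm set \<Rightarrow> lit \<Rightarrow> bool" where
  "lit_true2 M (Pos a) \<longleftrightarrow> a \<in> M"
| "lit_true2 M (Neg a) \<longleftrightarrow> a \<notin> M"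
| "lit_true2 M (Eq s t) \<longleftrightarrow> s = t"

definition is_model :: "clause set \<Rightarrow> trm set \<Rightarrow> bool" where
  "is_model P M \<longleftrightarrow> M \<subseteq> base P \<and>
     (\<forall>(h, B)\<in>Gr P. (\<forall>l\<in>set B. lit_true2 M l) \<longrightarrow> h \<in> M)"

text \<open>Dependency edges of the ground program: (head, body atom).\<close>
definition dep :: "clause set \<Rightarrow> (trm \<times> trm) set" where
  "dep P = {(h, a) | h B a. (h, B) \<in> Gr P \<and> (Pos a \<in> set B \<or> Neg a \<in> set B)}"

definition neg_dep :: "clause set \<Rightarrow> (trm \<times> trm) set" where
  "neg_dep P = {(h, a) | h B a. (h, B) \<in> Gr P \<and> Neg a \<in> set B}"

text \<open>(a, b) \<in> prio P  means  a < b, i.e. b has higher priority than a: there is a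
  dependency path from a to b through at least one negative edge.\<close>
definition prio :: "clause set \<Rightarrow> (trm \<times> trm) set" where
  "prio P = (dep P)\<^sup>* O neg_dep P O (dep P)\<^sup>*"

definition preferable :: "clause set \<Rightarrow> trm set \<Rightarrow> trm set \<Rightarrow> bool" where
  "preferable P N M \<longleftrightarrow> N \<noteq> M \<and> (\<forall>a\<in>N - M. \<exists>b\<in>M - N. (a, b) \<in> prio P)"

definition is_perfect :: "clause set \<Rightarrow> trm set \<Rightarrow> bool" where
  "is_perfect P M \<longleftrightarrow> is_model P M \<and> \<not> (\<exists>N. is_model P N \<and> preferable P N M)"

definition perfect_model :: "clause set \<Rightarrow> trm set" where
  "perfect_model P = (THE M. is_perfect P M)"

section \<open>Well-founded model (Van Gelder, Ross, Schlipf)\<close>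

text \<open>Partial interpretations are pairs (T, F) of sets of ground atoms.\<close>
fun lit_true3 :: "trm set \<times> trm set \<Rightarrow> lit \<Rightarrow> bool" where
  "lit_true3 I (Pos a) \<longleftrightarrow> a \<in> fst I"
| "lit_true3 I (Neg a) \<longleftrightarrow> a \<in> snd I"
| "lit_true3 I (Eq s t) \<longleftrightarrow> s = t"

fun lit_false3 :: "trm set \<times> trm set \<Rightarrow> lit \<Rightarrow> bool" where
  "lit_false3 I (Pos a) \<longleftrightarrow> a \<in> snd I"
| "lit_false3 I (Neg a) \<longleftrightarrow> a \<in> fst I"
| "lit_false3 I (Eq s t) \<longleftrightarrow> s \<noteq> t"

definition unfounded :: "clause set \<Rightarrow> trm set \<times> trm set \<Rightarrow> trm set \<Rightarrow> bool" where
  "unfounded P I X \<longleftrightarrow> X \<subseteq> base P \<and>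
     (\<forall>a\<in>X. \<forall>(h, B)\<in>Gr P. h = a \<longrightarrow>
        (\<exists>l\<in>set B. lit_false3 I l \<or> (\<exists>b. l = Pos b \<and> b \<in> X)))"

definition greatest_unfounded :: "clause set \<Rightarrow> trm set \<times> trm set \<Rightarrow> trm set" where
  "greatest_unfounded P I = \<Union>{X. unfounded P I X}"

definition T_op :: "clause set \<Rightarrow> trm set \<times> trm set \<Rightarrow> trm set" where
  "T_op P I = {h. \<exists>B. (h, B) \<in> Gr P \<and> (\<forall>l\<in>set B. lit_true3 I l)}"

definition W_op :: "clause set \<Rightarrow> trm set \<times> trm set \<Rightarrow> trm set \<times> trm set" where
  "W_op P I = (T_op P I, greatest_unfounded P I)"

definition wf_model :: "clause set \<Rightarrow> trm set \<times> trm set" where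
  "wf_model P = lfp (W_op P)"

section \<open>Herbrand interpretations N_P and M_P (their valuations on ground atoms)\<close>

datatype tv = Fls | Undef | Tru

definition N_val :: "clause set \<Rightarrow> trm \<Rightarrow> tv" where
  "N_val P a = (if a \<in> perfect_model P then Tru else Fls)"

definition M_val :: "clause set \<Rightarrow> trm \<Rightarrow> tv" where
  "M_val P a = (if a \<in> fst (wf_model P) then Tru
                else if a \<in> snd (wf_model P) then Fls else Undef)"

end

theory Submission
  imports Defs
begin

text \<open>
  Stratification yields a level on ground atoms, the stratum of the predicate constant at their
  head, such that in every ground clause positive body atoms have level at most that of the head
  and negative ones strictly smaller level. For an atom headed by a predicate variable this holds
  because the variable can only be instantiated by a term headed by a predicate constant of
  greater or equal type, which is what the stratification condition for variables quantifies over.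

  On such a locally stratified ground program the standard model is built level by level, each
  level the least fixpoint of its clauses with negation read in the lower levels. An atom of the
  standard model missing from a model \<open>M\<close> is outweighed by an atom of \<open>M\<close> outside the standard
  model; comparing at a difference of least level shows that no model is preferable to the
  standard model and that it is preferable to every other model, so it is the unique perfect
  model. The well-founded model lies below it, since the standard model read as a total
  interpretation is a pre-fixpoint of the well-founded operator, and it decides every atom by
  induction on the level: the false atoms of each level form an unfounded set.
\<close>

lemma ty_ge_refl: "ty_ge t t"
  by (cases t) auto

lemma ty_ge_Arr: "ty_ge x (Arr a r) \<Longrightarrow> ty_ge x r"
  by (induction x) (auto simp: ty_ge_refl)

lemma iota_chain_not_ty_ge_Omicron: "iota_chain t \<Longrightarrow> \<not> ty_ge t Omicron"
  by (induction t rule: iota_chain.induct) auto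

lemma head_sym_ty_ge:
  "ty_of t = Some r \<Longrightarrow>
    (case head_sym t of Con q \<Rightarrow> ty_ge (snd q) r | Var v \<Rightarrow> ty_ge (snd v) r | _ \<Rightarrow> True)"
proof (induction t arbitrary: r)
  case (App s u)
  from App.prems obtain a where "ty_of s = Some (Arr a r)"
    by (auto split: option.splits ty.splits if_splits)
  with App.IH(1) show ?case
    by (auto split: trm.splits intro: ty_ge_Arr)
qed (auto simp: ty_ge_refl)

lemma head_sym_subst:
  "head_sym (subst \<theta> t) = (case head_sym t of Var v \<Rightarrow> head_sym (\<theta> v) | x \<Rightarrow> x)"
  by (induction t) (auto split: trm.splits)

lemma head_sym_Var_in_vars: "head_sym t = Var v \<Longrightarrow> v \<in> vars_of t"
  by (induction t) auto

lemma head_sym_Con_in_consts: "head_sym t = Con c \<Longrightarrow> c \<in> consts_of t"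
  by (induction t) auto

lemma head_sym_not_App: "head_sym t \<noteq> App x y"
  by (induction t) auto

lemma head_sym_foldl_App: "head_sym (foldl App t xs) = head_sym t"
  by (induction xs arbitrary: t) auto

lemma ty_of_foldl_App_Var:
  "ty_of t = Some (arrows (map snd vs) r) \<Longrightarrow> ty_of (foldl App t (map Var vs)) = Some r"
  by (induction vs arbitrary: t) auto

lemma vars_of_foldl_App_Var: "vars_of (foldl App t (map Var vs)) = vars_of t \<union> set vs"
  by (induction vs arbitrary: t) auto

lemma consts_of_foldl_App_Var: "consts_of (foldl App t (map Var vs)) = consts_of t"
  by (induction vs arbitrary: t) auto

lemma subst_ground:
  assumes "vars_of t \<subseteq> V" and "\<forall>v\<in>V. \<theta> v \<in> U P (snd v)"
  shows "vars_of (subst \<theta> t) = {} \<and> ty_of (subst \<theta> t) = ty_of t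
    \<and> consts_of (subst \<theta> t) \<subseteq> consts_of t \<union> consts_prog P"
  using assms
proof (induction t)
  case (App t1 t2)
  then have "ty_of (subst \<theta> t1) = ty_of t1" and "ty_of (subst \<theta> t2) = ty_of t2"
    by auto
  then have "ty_of (subst \<theta> (App t1 t2)) = ty_of (App t1 t2)"
    by (simp only: subst.simps ty_of.simps)
  with App show ?case by auto
qed (auto simp: U_def)

lemma subst_in_base:
  assumes "vars_of a \<subseteq> V" and "\<forall>v\<in>V. \<theta> v \<in> U P (snd v)"
    and "ty_of a = Some Omicron" and "consts_of a \<subseteq> consts_prog P"
  shows "subst \<theta> a \<in> base P"
  using subst_ground[OF assms(1,2)] assms(3,4) by (auto simp: base_def U_def)

lemma consts_prog_ty:
  assumes "is_program P" and "c \<in> consts_prog P"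
  shows "snd c = Iota \<or> is_fun_ty (snd c) \<or> is_pred_ty (snd c)"
proof -
  from assms(2) obtain cl where cl: "cl \<in> P"
    and "c = hd_pred cl \<or> (\<exists>l\<in>set (body cl). c \<in> lit_consts l)"
    unfolding consts_prog_def by blast
  moreover have "wf_clause cl"
    using assms(1) cl by (auto simp: is_program_def)
  ultimately show ?thesis
  proof (elim disjE bexE)
    fix l assume "l \<in> set (body cl)" "c \<in> lit_consts l" "wf_clause cl"
    then have "wf_lit l"
      by (auto simp: wf_clause_def)
    with \<open>c \<in> lit_consts l\<close> show ?thesis
      by (cases l) (auto simp: wf_trm_def)
  qed (auto simp: wf_clause_def)
qed

lemma Gr_E:
  assumes "(h, B) \<in> Gr P"
  obtains c \<theta> where "c \<in> P" and "\<forall>v\<in>clause_vars c. \<theta> v \<in> U P (snd v)"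
    and "h = subst \<theta> (head_atom c)" and "B = map (subst_lit \<theta>) (body c)"
  using assms unfolding Gr_def by blast

lemma Gr_head_in_base:
  assumes "is_program P" and "(h, B) \<in> Gr P"
  shows "h \<in> base P"
proof -
  obtain c \<theta> where c: "c \<in> P" and \<theta>: "\<forall>v\<in>clause_vars c. \<theta> v \<in> U P (snd v)"
    and h: "h = subst \<theta> (head_atom c)"
    using assms(2) by (rule Gr_E)
  have "wf_clause c"
    using assms(1) c by (auto simp: is_program_def)
  then have "ty_of (head_atom c) = Some Omicron"
    by (simp add: head_atom_def wf_clause_def ty_of_foldl_App_Var)
  moreover have "vars_of (head_atom c) \<subseteq> clause_vars c"
    by (simp add: head_atom_def vars_of_foldl_App_Var clause_vars_def)
  moreover have "consts_of (head_atom c) \<subseteq> consts_prog P"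
    using c by (auto simp: head_atom_def consts_of_foldl_App_Var consts_prog_def)
  ultimately show ?thesis
    using subst_in_base[OF _ \<theta>] h by blast
qed

lemma ground_body_atom:
  assumes P: "is_program P" and c: "c \<in> P"
    and \<theta>: "\<forall>v\<in>clause_vars c. \<theta> v \<in> U P (snd v)"
    and l: "l \<in> set (body c)" "l = Pos a \<or> l = Neg a"
  obtains q where "subst \<theta> a \<in> base P" and "head_sym (subst \<theta> a) = Con q"
    and "q \<in> pred_consts P"
    and "head_sym a = Con q \<or> (\<exists>Q. head_sym a = Var Q \<and> ty_ge (snd q) (snd Q))"
proof -
  have "wf_clause c"
    using P c by (auto simp: is_program_def)
  then have ty_a: "ty_of a = Some Omicron"
    using l by (auto simp: wf_clause_def)
  have vars_a: "vars_of a \<subseteq> clause_vars c"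
    using l by (auto simp: clause_vars_def)
  have "consts_of a \<subseteq> consts_prog P"
    using l c unfolding consts_prog_def by force
  with subst_ground[OF vars_a \<theta>] ty_a
  have g: "vars_of (subst \<theta> a) = {}" "ty_of (subst \<theta> a) = Some Omicron"
    "consts_of (subst \<theta> a) \<subseteq> consts_prog P"
    by auto
  then have base: "subst \<theta> a \<in> base P"
    by (auto simp: base_def U_def)
  obtain q where q: "head_sym (subst \<theta> a) = Con q"
    using g(1) head_sym_Var_in_vars head_sym_not_App
    by (cases "head_sym (subst \<theta> a)") fastforce+
  have q_prog: "q \<in> consts_prog P"
    using head_sym_Con_in_consts[OF q] g(3) by auto
  have "ty_ge (snd q) Omicron"
    using head_sym_ty_ge[OF g(2)] q by simp
  then have "q \<in> pred_consts P"
    using consts_prog_ty[OF P q_prog] iota_chain_not_ty_ge_Omicron q_prog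
    by (auto simp: is_fun_ty_def pred_consts_def)
  moreover have "head_sym a = Con q \<or> (\<exists>Q. head_sym a = Var Q \<and> ty_ge (snd q) (snd Q))"
  proof (cases "head_sym a")
    case (Var Q)
    then have "ty_of (\<theta> Q) = Some (snd Q)"
      using head_sym_Var_in_vars[OF Var] vars_a \<theta> by (auto simp: U_def)
    moreover have "head_sym (\<theta> Q) = Con q"
      using q Var head_sym_subst[of \<theta> a] by simp
    ultimately show ?thesis
      using head_sym_ty_ge[of "\<theta> Q"] Var by auto
  next
    case (Con x)
    then show ?thesis
      using q head_sym_subst[of \<theta> a] by simp
  qed (use head_sym_not_App in blast)
  ultimately show thesis
    using that base q by blast
qed

section \<open>Stratified programs are locally stratified\<close>

locale locally_stratified =
  fixes P :: "clause set" and lvl :: "trm \<Rightarrow> nat"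
  assumes Gr_head_base: "(h, B) \<in> Gr P \<Longrightarrow> h \<in> base P"
    and Gr_Pos_level: "(h, B) \<in> Gr P \<Longrightarrow> Pos b \<in> set B \<Longrightarrow> b \<in> base P \<and> lvl b \<le> lvl h"
    and Gr_Neg_level: "(h, B) \<in> Gr P \<Longrightarrow> Neg b \<in> set B \<Longrightarrow> b \<in> base P \<and> lvl b < lvl h"

definition atom_level :: "(sym \<Rightarrow> nat) \<Rightarrow> trm \<Rightarrow> nat" where
  "atom_level st t = (case head_sym t of Con c \<Rightarrow> st c | _ \<Rightarrow> 0)"

lemma Gr_body_atom_level:
  assumes P: "is_program P" and hB: "(h, B) \<in> Gr P"
    and lit: "L b \<in> set B" "L = Pos \<or> L = Neg"
    and cond: "\<And>c a. c \<in> P \<Longrightarrow> L a \<in> set (body c) \<Longrightarrow>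
       (case head_sym a of Con q \<Rightarrow> R (st q) (st (hd_pred c))
        | Var Q \<Rightarrow> (\<forall>q\<in>pred_consts P. ty_ge (snd q) (snd Q) \<longrightarrow> R (st q) (st (hd_pred c)))
        | _ \<Rightarrow> True)"
  shows "b \<in> base P \<and> R (atom_level st b) (atom_level st h)"
proof -
  obtain c \<theta> where c: "c \<in> P" and \<theta>: "\<forall>v\<in>clause_vars c. \<theta> v \<in> U P (snd v)"
    and h: "h = subst \<theta> (head_atom c)" and B: "B = map (subst_lit \<theta>) (body c)"
    using hB by (rule Gr_E)
  from lit(1) B obtain l where l: "l \<in> set (body c)" "subst_lit \<theta> l = L b"
    by auto
  with lit(2) obtain a where a: "L a \<in> set (body c)" "b = subst \<theta> a"
    by (cases l) auto
  obtain q where "b \<in> base P" "head_sym b = Con q" "q \<in> pred_consts P"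
    "head_sym a = Con q \<or> (\<exists>Q. head_sym a = Var Q \<and> ty_ge (snd q) (snd Q))"
    using ground_body_atom[OF P c \<theta> a(1)] lit(2) a(2) by blast
  moreover have "atom_level st h = st (hd_pred c)"
    using h head_sym_subst[of \<theta> "head_atom c"]
    by (simp add: head_atom_def head_sym_foldl_App atom_level_def)
  ultimately show ?thesis
    using cond[OF c a(1)] by (auto simp: atom_level_def)
qed

lemma stratified_locally_stratified:
  assumes P: "is_program P" and "stratified P"
  obtains lvl where "locally_stratified P lvl"
proof -
  obtain st :: "sym \<Rightarrow> nat" where
    Pos_cond: "\<And>c a. c \<in> P \<Longrightarrow> Pos a \<in> set (body c) \<Longrightarrow> (case head_sym a of
        Con q \<Rightarrow> st q \<le> st (hd_pred c)
      | Var Q \<Rightarrow> (\<forall>q\<in>pred_consts P. ty_ge (snd q) (snd Q) \<longrightarrow> st q \<le> st (hd_pred c))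
      | _ \<Rightarrow> True)" and
    Neg_cond: "\<And>c a. c \<in> P \<Longrightarrow> Neg a \<in> set (body c) \<Longrightarrow> (case head_sym a of
        Con q \<Rightarrow> st q < st (hd_pred c)
      | Var Q \<Rightarrow> (\<forall>q\<in>pred_consts P. ty_ge (snd q) (snd Q) \<longrightarrow> st q < st (hd_pred c))
      | _ \<Rightarrow> True)"
    using assms(2) unfolding stratified_def by fastforce
  have "locally_stratified P (atom_level st)"
  proof
    show "h \<in> base P" if "(h, B) \<in> Gr P" for h B
      using Gr_head_in_base[OF P that] .
    show "b \<in> base P \<and> atom_level st b \<le> atom_level st h"
      if "(h, B) \<in> Gr P" "Pos b \<in> set B" for h B b
      using Gr_body_atom_level[OF P that(1), of Pos b "(\<le>)"] that(2) Pos_cond by blast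
    show "b \<in> base P \<and> atom_level st b < atom_level st h"
      if "(h, B) \<in> Gr P" "Neg b \<in> set B" for h B b
      using Gr_body_atom_level[OF P that(1), of Neg b "(<)"] that(2) Neg_cond by blast
  qed
  then show thesis by (rule that)
qed

section \<open>The standard model is the unique perfect model\<close>

text \<open>Truth of a literal when the lower levels are fixed to \<open>A\<close> and the current level is
  approximated by \<open>X\<close>; negative literals are read in \<open>A\<close> alone, which makes the
  truth value monotone in \<open>X\<close>.\<close>
fun lit_true_strat :: "trm set \<Rightarrow> trm set \<Rightarrow> lit \<Rightarrow> bool" where
  "lit_true_strat A X (Pos a) \<longleftrightarrow> a \<in> A \<or> a \<in> X"
| "lit_true_strat A X (Neg a) \<longleftrightarrow> a \<notin> A"
| "lit_true_strat A X (Eq s t) \<longleftrightarrow> s = t"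

lemma lit_true_strat_mono: "X \<subseteq> Y \<Longrightarrow> lit_true_strat A X l \<Longrightarrow> lit_true_strat A Y l"
  by (cases l) auto

lemma dep_prio_trans: "(a, b) \<in> dep P \<Longrightarrow> (b, c) \<in> prio P \<Longrightarrow> (a, c) \<in> prio P"
  unfolding prio_def by (meson converse_rtrancl_into_rtrancl relcomp.simps)

context locally_stratified
begin

definition stratum_step :: "trm set \<Rightarrow> nat \<Rightarrow> trm set \<Rightarrow> trm set" where
  "stratum_step A k X =
     {h. lvl h = k \<and> (\<exists>B. (h, B) \<in> Gr P \<and> (\<forall>l\<in>set B. lit_true_strat A X l))}"

lemma mono_stratum_step: "mono (stratum_step A k)"
  unfolding mono_def stratum_step_def using lit_true_strat_mono by blast

primrec below :: "nat \<Rightarrow> trm set" where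
  "below 0 = {}"
| "below (Suc k) = below k \<union> lfp (stratum_step (below k) k)"

definition stratum :: "nat \<Rightarrow> trm set" where
  "stratum k = lfp (stratum_step (below k) k)"

definition std_model :: "trm set" where
  "std_model = (\<Union>k. stratum k)"

lemma stratum_unfold: "stratum k = stratum_step (below k) k (stratum k)"
  unfolding stratum_def by (rule lfp_unfold[OF mono_stratum_step])

lemma stratum_level: "a \<in> stratum k \<Longrightarrow> lvl a = k"
  using stratum_unfold[of k] by (auto simp: stratum_step_def)

lemma below_eq_std_model: "below k = {a \<in> std_model. lvl a < k}"
proof -
  have "below k = (\<Union>j<k. stratum j)"
    by (induction k) (auto simp: stratum_def lessThan_Suc)
  then show ?thesis
    unfolding std_model_def using stratum_level by fastforce
qed

lemma stratum_eq_std_model: "stratum k = {a \<in> std_model. lvl a = k}"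
  unfolding std_model_def using stratum_level by fastforce

lemma std_model_subset_base: "std_model \<subseteq> base P"
proof
  fix a assume "a \<in> std_model"
  then obtain k where "a \<in> stratum_step (below k) k (stratum k)"
    using stratum_unfold by (auto simp: std_model_def)
  then show "a \<in> base P"
    using Gr_head_base by (auto simp: stratum_step_def)
qed

lemma is_model_std_model: "is_model P std_model"
  unfolding is_model_def
proof (intro conjI std_model_subset_base ballI impI, clarify)
  fix h B assume hB: "(h, B) \<in> Gr P" and true: "\<forall>l\<in>set B. lit_true2 std_model l"
  have "lit_true_strat (below (lvl h)) (stratum (lvl h)) l" if l: "l \<in> set B" for l
    using true l Gr_Pos_level[OF hB]
    by (cases l) (auto simp: below_eq_std_model stratum_eq_std_model order_le_less)
  then have "h \<in> stratum_step (below (lvl h)) (lvl h) (stratum (lvl h))"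
    using hB by (auto simp: stratum_step_def)
  then show "h \<in> std_model"
    using stratum_unfold std_model_def by auto
qed

lemma std_model_induct[consumes 1, case_names step]:
  assumes "a \<in> std_model"
    and step: "\<And>a B. (a, B) \<in> Gr P \<Longrightarrow> \<forall>l\<in>set B. lit_true2 std_model l
      \<Longrightarrow> (\<And>b. Pos b \<in> set B \<Longrightarrow> Q b) \<Longrightarrow> Q a"
  shows "Q a"
proof -
  have "\<forall>a\<in>stratum k. Q a" for k
  proof (induction k rule: less_induct)
    case (less k)
    then have below: "\<forall>a\<in>below k. Q a"
      using below_eq_std_model stratum_eq_std_model by auto
    show ?case
    proof
      fix a assume "a \<in> stratum k"
      then show "Q a"
        unfolding stratum_def
      proof (rule lfp_induct_set[OF _ mono_stratum_step])
        fix x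
        assume "x \<in> stratum_step (below k) k (lfp (stratum_step (below k) k) \<inter> {x. Q x})"
        then obtain B where x: "lvl x = k" "(x, B) \<in> Gr P"
          and true: "\<forall>l\<in>set B. lit_true_strat (below k) (stratum k \<inter> {x. Q x}) l"
          by (auto simp: stratum_step_def stratum_def)
        have "lit_true2 std_model l" if l: "l \<in> set B" for l
          using true l Gr_Neg_level[OF x(2)] x(1)
          by (cases l) (auto simp: below_eq_std_model stratum_eq_std_model)
        moreover have "Q b" if "Pos b \<in> set B" for b
          using true that below by fastforce
        ultimately show "Q x"
          using step[OF x(2)] by blast
      qed
    qed
  qed
  then show ?thesis
    using assms(1) std_model_def by auto
qed

lemma prio_level: "(a, b) \<in> prio P \<Longrightarrow> lvl b < lvl a"
proof -
  have dep: "lvl b \<le> lvl a" if "(a, b) \<in> (dep P)\<^sup>*" for a b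
    using that
  proof (induction rule: rtrancl_induct)
    case (step y z)
    then show ?case
      unfolding dep_def using Gr_Pos_level Gr_Neg_level by fastforce
  qed simp
  have "lvl b < lvl a" if "(a, b) \<in> neg_dep P" for a b
    using that Gr_Neg_level unfolding neg_dep_def by blast
  then show "(a, b) \<in> prio P \<Longrightarrow> lvl b < lvl a"
    unfolding prio_def by (fastforce dest: dep)
qed

lemma std_model_dominates:
  assumes M: "is_model P M" and "a \<in> std_model"
  shows "a \<in> M \<or> (\<exists>b\<in>M - std_model. (a, b) \<in> prio P)"
  using \<open>a \<in> std_model\<close>
proof (induction rule: std_model_induct)
  case (step a B)
  show ?case
  proof (cases "\<forall>l\<in>set B. lit_true2 M l")
    case True
    then show ?thesis
      using M step(1) by (auto simp: is_model_def)
  next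
    case False
    then obtain l where l: "l \<in> set B" "\<not> lit_true2 M l"
      by blast
    show ?thesis
    proof (cases l)
      case (Pos b)
      then have "(a, b) \<in> dep P"
        using l step(1) by (auto simp: dep_def)
      moreover obtain c where "c \<in> M - std_model" "(b, c) \<in> prio P"
        using step(3) Pos l by auto
      ultimately show ?thesis
        using dep_prio_trans by blast
    next
      case (Neg b)
      then have "b \<in> M - std_model" "(a, b) \<in> neg_dep P"
        using l step(1,2) by (auto simp: neg_dep_def)
      then show ?thesis
        unfolding prio_def by blast
    qed (use l step(2) in auto)
  qed
qed

lemma not_preferable_to_std_model:
  assumes N: "is_model P N"
  shows "\<not> preferable P N std_model"
proof
  assume pref: "preferable P N std_model"
  define D where "D = (N - std_model) \<union> (std_model - N)"
  have "D \<noteq> {}"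
    using pref by (auto simp: preferable_def D_def)
  then obtain d where d: "d \<in> D" and least: "\<forall>e\<in>D. lvl d \<le> lvl e"
    using ex_has_least_nat[of "\<lambda>d. d \<in> D" _ lvl] by blast
  obtain e where "e \<in> D" "(d, e) \<in> prio P"
  proof (cases "d \<in> N")
    case True
    then show thesis
      using that d pref by (auto simp: preferable_def D_def)
  next
    case False
    then show thesis
      using that d std_model_dominates[OF N] by (auto simp: D_def)
  qed
  then show False
    using least prio_level by fastforce
qed

lemma is_perfect_std_model: "is_perfect P std_model"
  using is_model_std_model not_preferable_to_std_model by (auto simp: is_perfect_def)

lemma is_perfect_imp_std_model:
  assumes "is_perfect P M"
  shows "M = std_model"
proof (rule ccontr)
  assume "M \<noteq> std_model"
  moreover have "\<forall>a\<in>std_model - M. \<exists>b\<in>M - std_model. (a, b) \<in> prio P"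
    using assms std_model_dominates by (auto simp: is_perfect_def)
  ultimately have "preferable P std_model M"
    unfolding preferable_def by auto
  then show False
    using assms is_model_std_model by (auto simp: is_perfect_def)
qed

lemma ex1_perfect: "\<exists>!M. is_perfect P M"
  using is_perfect_std_model is_perfect_imp_std_model by (rule ex1I)

lemma perfect_model_eq: "perfect_model P = std_model"
  unfolding perfect_model_def using is_perfect_std_model is_perfect_imp_std_model
  by (rule the_equality)

end

section \<open>Agreement with the well-founded model\<close>

lemma lit_true3_mono:
  "fst I \<subseteq> fst J \<Longrightarrow> snd I \<subseteq> snd J \<Longrightarrow> lit_true3 I l \<Longrightarrow> lit_true3 J l"
  by (cases l) auto

lemma lit_false3_mono:
  "fst I \<subseteq> fst J \<Longrightarrow> snd I \<subseteq> snd J \<Longrightarrow> lit_false3 I l \<Longrightarrow> lit_false3 J l"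
  by (cases l) auto

lemma mono_W_op: "mono (W_op P)"
proof (rule monoI)
  fix I J :: "trm set \<times> trm set"
  assume "I \<le> J"
  then have fst: "fst I \<subseteq> fst J" and snd: "snd I \<subseteq> snd J"
    by (auto simp: less_eq_prod_def)
  have "T_op P I \<subseteq> T_op P J"
    unfolding T_op_def using lit_true3_mono[OF fst snd] by blast
  moreover have "unfounded P J X" if "unfounded P I X" for X
    using that lit_false3_mono[OF fst snd] unfolding unfounded_def by blast
  then have "greatest_unfounded P I \<subseteq> greatest_unfounded P J"
    unfolding greatest_unfounded_def by blast
  ultimately show "W_op P I \<le> W_op P J"
    by (simp add: W_op_def less_eq_prod_def)
qed

lemma wf_model_fixpoint:
  "fst (wf_model P) = T_op P (wf_model P)"
  "snd (wf_model P) = greatest_unfounded P (wf_model P)"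
proof -
  have "wf_model P = W_op P (wf_model P)"
    unfolding wf_model_def by (rule lfp_unfold[OF mono_W_op])
  then show "fst (wf_model P) = T_op P (wf_model P)"
    "snd (wf_model P) = greatest_unfounded P (wf_model P)"
    by (metis W_op_def fst_conv snd_conv)+
qed

context locally_stratified
begin

text \<open>The standard model, read as a total interpretation, is a pre-fixpoint of \<open>W_op P\<close>.\<close>
lemma wf_model_sound: "fst (wf_model P) \<subseteq> std_model" "snd (wf_model P) \<subseteq> - std_model"
proof -
  have true3: "lit_true3 (std_model, - std_model) l = lit_true2 std_model l" for l
    by (cases l) auto
  have "T_op P (std_model, - std_model) \<subseteq> std_model"
    using is_model_std_model unfolding T_op_def is_model_def true3 by blast
  moreover have "X \<subseteq> - std_model" if X: "unfounded P (std_model, - std_model) X" for X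
  proof -
    have "a \<notin> X" if "a \<in> std_model" for a
      using that
    proof (induction rule: std_model_induct)
      case (step a B)
      show ?case
      proof
        assume "a \<in> X"
        then obtain l where l: "l \<in> set B"
          "lit_false3 (std_model, - std_model) l \<or> (\<exists>b. l = Pos b \<and> b \<in> X)"
          using X step(1) unfolding unfounded_def by blast
        moreover have "lit_true2 std_model l"
          using step(2) l(1) by blast
        then have "\<not> lit_false3 (std_model, - std_model) l"
          by (cases l) auto
        ultimately show False
          using step(3) by blast
      qed
    qed
    then show ?thesis by blast
  qed
  then have "greatest_unfounded P (std_model, - std_model) \<subseteq> - std_model"
    unfolding greatest_unfounded_def by blast
  ultimately have "W_op P (std_model, - std_model) \<le> (std_model, - std_model)"
    by (simp add: W_op_def less_eq_prod_def)
  then have "wf_model P \<le> (std_model, - std_model)"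
    unfolding wf_model_def by (rule lfp_lowerbound)
  then show "fst (wf_model P) \<subseteq> std_model" "snd (wf_model P) \<subseteq> - std_model"
    by (auto simp: less_eq_prod_def)
qed

lemma wf_model_true_upto:
  assumes false_below: "\<forall>b\<in>base P - std_model. lvl b < k \<longrightarrow> b \<in> snd (wf_model P)"
    and "a \<in> std_model" and "lvl a \<le> k"
  shows "a \<in> fst (wf_model P)"
  using assms(2,3)
proof (induction rule: std_model_induct)
  case (step a B)
  have "lit_true3 (wf_model P) l" if l: "l \<in> set B" for l
  proof (cases l)
    case (Pos b)
    then show ?thesis
      using step l Gr_Pos_level[OF step(1)] by fastforce
  next
    case (Neg b)
    then have "b \<in> base P" "lvl b < lvl a"
      using l Gr_Neg_level[OF step(1)] by auto
    moreover have "b \<notin> std_model"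
      using l step(2) Neg by auto
    ultimately have "b \<in> base P - std_model" "lvl b < k"
      using step(4) by auto
    then show ?thesis
      using false_below Neg by auto
  qed (use l step(2) in auto)
  then show ?case
    using step(1) wf_model_fixpoint(1) by (auto simp: T_op_def)
qed

text \<open>Each ground clause of such an atom has a body literal false in the standard model; it is
  either a positive atom of the same level or already decided by the level induction.\<close>
lemma wf_model_false_at:
  assumes false_below: "\<forall>b\<in>base P - std_model. lvl b < k \<longrightarrow> b \<in> snd (wf_model P)"
  shows "{a \<in> base P - std_model. lvl a = k} \<subseteq> snd (wf_model P)"
proof -
  let ?W = "wf_model P"
  let ?X = "{a \<in> base P - std_model. lvl a = k}"
  have "\<exists>l\<in>set B. lit_false3 ?W l \<or> (\<exists>b. l = Pos b \<and> b \<in> ?X)"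
    if a: "a \<in> ?X" and aB: "(a, B) \<in> Gr P" for a B
  proof -
    have "\<not> (\<forall>l\<in>set B. lit_true2 std_model l)"
      using a aB is_model_std_model by (auto simp: is_model_def)
    then obtain l where l: "l \<in> set B" "\<not> lit_true2 std_model l"
      by blast
    have "lit_false3 ?W l \<or> (\<exists>b. l = Pos b \<and> b \<in> ?X)"
    proof (cases l)
      case (Pos b)
      then have "b \<in> base P - std_model" "lvl b \<le> k"
        using l a Gr_Pos_level[OF aB] by auto
      then show ?thesis
        using false_below Pos by (cases "lvl b = k") auto
    next
      case (Neg b)
      then have "b \<in> std_model" "lvl b \<le> k"
        using l a Gr_Neg_level[OF aB, of b] by auto
      then show ?thesis
        using wf_model_true_upto[OF false_below] Neg by simp
    qed (use l in auto)
    then show ?thesis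
      using l(1) by blast
  qed
  then have "unfounded P ?W ?X"
    unfolding unfounded_def by blast
  then show ?thesis
    using wf_model_fixpoint(2) unfolding greatest_unfounded_def by blast
qed

lemma wf_model_false_complete: "a \<in> base P - std_model \<Longrightarrow> a \<in> snd (wf_model P)"
proof (induction "lvl a" arbitrary: a rule: less_induct)
  case less
  then show ?case
    using wf_model_false_at[of "lvl a"] by blast
qed

lemma wf_model_true_complete: "a \<in> std_model \<Longrightarrow> a \<in> fst (wf_model P)"
  using wf_model_true_upto wf_model_false_complete by blast

lemma N_val_eq_M_val:
  assumes "a \<in> base P"
  shows "N_val P a = M_val P a"
proof (cases "a \<in> std_model")
  case True
  then show ?thesis
    using wf_model_true_complete by (simp add: N_val_def M_val_def perfect_model_eq)
next
  case False
  then show ?thesis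
    using assms wf_model_false_complete wf_model_sound(1)
    by (auto simp: N_val_def M_val_def perfect_model_eq)
qed

end

theorem corollary1:
  assumes "is_program P" and "stratified P"
  shows "(\<exists>!M. is_perfect P M) \<and> (\<forall>a\<in>base P. N_val P a = M_val P a)"
proof -
  obtain lvl where "locally_stratified P lvl"
    using stratified_locally_stratified[OF assms] .
  then interpret locally_stratified P lvl .
  show ?thesis
    using ex1_perfect N_val_eq_M_val by blast
qed

end
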